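(* Let $n>3$ be an integer. The inverse of the circulant matrix $\mathrm{circ}(3,-1,0,\ldots,0,-1)$ of order $n$ is \[[\mathrm{circ}(3,-1,0,\ldots,0,-1)]^{-1}=\mathrm{circ}(a_0,a_1,\ldots,a_{n-1}),\] where for $j=0,1,\ldots,n-1$, \[a_j=\frac{2^{n-j}}{\sqrt{5}}\left[\frac{(3-\sqrt{5})^j}{2^n-(3-\sqrt{5})^n}-\frac{(3+\sqrt{5})^j}{2^n-(3+\sqrt{5})^n}\right].\]
   Context: For $c_0,\dots,c_{k-1}$, $\mathrm{circ}(c_0,\ldots,c_{k-1})$ denotes the $k\times k$ circulant matrix whose $(i,j)$-entry is $c_{(j-i)\bmod k}$ (first row $c_0,\dots,c_{k-1}$, each subsequent row the cyclic right shift of the previous one). *)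

theory Defs
  imports Complex_Main "Jordan_Normal_Form.Matrix"
begin

definition circ :: "nat \<Rightarrow> (nat \<Rightarrow> 'a) \<Rightarrow> 'a mat" where
  "circ k c = mat k k (\<lambda>(i, j). c (nat ((int j - int i) mod int k)))"

end

theory Submission
  imports Defs
begin

text \<open>Circulant matrices of order n multiply by cyclic convolution of their first rows;
in particular they commute, and circ c * circ d = 1 amounts to the convolution of c and d
being the Kronecker delta.  For c = (b, -1, 0, ..., 0, -1) the convolution with F at
position m is b F m - F (m - 1) - F (m + 1), indices taken mod n.  This is the delta as soon
as F satisfies F (p + 2) = b F (p + 1) - F p together with the boundary conditions
F n = F 0 and F (n + 1) = F 1 + 1.  If r, s are the two roots of x^2 - b x + 1, the sequence
(r^j / (1 - r^n) - s^j / (1 - s^n)) / (s - r) is such a solution; for b = 3 the roots are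
(3 -+ sqrt 5) / 2, and rescaling by powers of 2 gives the stated coefficients.\<close>

lemma dim_circ [simp]: "dim_row (circ k c) = k" "dim_col (circ k c) = k"
  by (simp_all add: circ_def)

lemma index_circ [simp]:
  "i < k \<Longrightarrow> j < k \<Longrightarrow> circ k c $$ (i, j) = c (nat ((int j - int i) mod int k))"
  by (simp add: circ_def)

lemma circ_cong: "(\<And>m. m < k \<Longrightarrow> c m = d m) \<Longrightarrow> circ k c = circ k d"
  by (rule eq_matI) (simp_all add: nat_less_iff)

lemma int_mod_diff_eq_0_iff:
  assumes "i < k" "j < k"
  shows "(int j - int i) mod int k = 0 \<longleftrightarrow> i = j"
  using assms by (auto simp: mod_eq_dvd_iff[symmetric] dest: mod_eq_0_iff_dvd[THEN iffD1])

lemma circ_delta: "circ k (\<lambda>m. if m = 0 then 1 else 0) = 1\<^sub>m k"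
  by (rule eq_matI) (auto simp: nat_eq_iff int_mod_diff_eq_0_iff)

definition cyclic_conv ::
    "nat \<Rightarrow> (nat \<Rightarrow> 'a) \<Rightarrow> (nat \<Rightarrow> 'a) \<Rightarrow> nat \<Rightarrow> 'a::comm_semiring_0" where
  "cyclic_conv k c d m = (\<Sum>j<k. c j * d (nat ((int m - int j) mod int k)))"

lemma bij_betw_mod_shift: "bij_betw (\<lambda>j. nat ((int j + s) mod int k)) {..<k} {..<k}"
proof (rule bij_betw_imageI)
  show "inj_on (\<lambda>j. nat ((int j + s) mod int k)) {..<k}"
  proof (rule inj_onI)
    fix i j assume "i \<in> {..<k}" "j \<in> {..<k}"
      and "nat ((int i + s) mod int k) = nat ((int j + s) mod int k)"
    then have "(int i + s) mod int k = (int j + s) mod int k"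
      using \<open>i \<in> {..<k}\<close> by (simp add: eq_nat_nat_iff)
    then have "int i mod int k = int j mod int k" by (simp add: mod_eq_dvd_iff)
    with \<open>i \<in> {..<k}\<close> \<open>j \<in> {..<k}\<close> show "i = j" by simp
  qed
  then show "(\<lambda>j. nat ((int j + s) mod int k)) ` {..<k} = {..<k}"
    by (intro endo_inj_surj) (auto simp: nat_less_iff)
qed

lemma bij_betw_mod_reflect: "bij_betw (\<lambda>j. nat ((s - int j) mod int k)) {..<k} {..<k}"
proof (rule bij_betw_imageI)
  show "inj_on (\<lambda>j. nat ((s - int j) mod int k)) {..<k}"
  proof (rule inj_onI)
    fix i j assume "i \<in> {..<k}" "j \<in> {..<k}"
      and "nat ((s - int i) mod int k) = nat ((s - int j) mod int k)"
    then have "(s - int i) mod int k = (s - int j) mod int k"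
      using \<open>i \<in> {..<k}\<close> by (simp add: eq_nat_nat_iff)
    then have "int j mod int k = int i mod int k" by (simp add: mod_eq_dvd_iff)
    with \<open>i \<in> {..<k}\<close> \<open>j \<in> {..<k}\<close> show "i = j" by simp
  qed
  then show "(\<lambda>j. nat ((s - int j) mod int k)) ` {..<k} = {..<k}"
    by (intro endo_inj_surj) (auto simp: nat_less_iff)
qed

lemma cyclic_conv_commute: "cyclic_conv k c d = cyclic_conv k d c"
proof
  fix m
  let ?t = "\<lambda>j. nat ((int m - int j) mod int k)"
  have "cyclic_conv k d c m = (\<Sum>j<k. d (?t j) * c (?t (?t j)))"
    unfolding cyclic_conv_def by (rule sum.reindex_bij_betw[OF bij_betw_mod_reflect, symmetric])
  also have "\<dots> = cyclic_conv k c d m"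
    unfolding cyclic_conv_def
    by (intro sum.cong refl) (simp add: mod_diff_right_eq mult.commute)
  finally show "cyclic_conv k c d m = cyclic_conv k d c m" ..
qed

lemma circ_mult_circ: "circ k c * circ k d = circ k (cyclic_conv k c d)"
proof (rule eq_matI)
  fix i l assume "i < dim_row (circ k (cyclic_conv k c d))"
    and "l < dim_col (circ k (cyclic_conv k c d))"
  then have il: "i < k" "l < k" by simp_all
  let ?t = "\<lambda>j. nat ((int j + - int i) mod int k)"
  have "(circ k c * circ k d) $$ (i, l)
      = (\<Sum>j<k. c (?t j) * d (nat ((int l - int j) mod int k)))"
    using il by (simp add: scalar_prod_def lessThan_atLeast0)
  also have "\<dots> = (\<Sum>j<k. c (?t j) * d (nat ((int l - int i - int (?t j)) mod int k)))"
    using il by (intro sum.cong refl) (simp add: mod_diff_right_eq)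
  also have "\<dots> = (\<Sum>j<k. c j * d (nat ((int l - int i - int j) mod int k)))"
    by (rule sum.reindex_bij_betw[OF bij_betw_mod_shift])
  also have "\<dots> = circ k (cyclic_conv k c d) $$ (i, l)"
    using il by (simp add: cyclic_conv_def mod_diff_left_eq)
  finally show "(circ k c * circ k d) $$ (i, l) = circ k (cyclic_conv k c d) $$ (i, l)" .
qed simp_all

lemma cyclic_conv_tridiag_eq_delta:
  fixes F :: "nat \<Rightarrow> 'a::comm_ring_1"
  assumes "2 < n" and rec: "\<And>p. F (p + 2) = b * F (p + 1) - F p"
    and wrap0: "F n = F 0" and wrap1: "F (n + 1) = F 1 + 1" and "m < n"
  shows "cyclic_conv n (\<lambda>j. if j = 0 then b else if j = 1 \<or> j = n - 1 then -1 else 0) F m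
       = (if m = 0 then 1 else 0)"
proof -
  let ?F = "\<lambda>j. F (nat ((int m - int j) mod int n))"
  have "cyclic_conv n (\<lambda>j. if j = 0 then b else if j = 1 \<or> j = n - 1 then -1 else 0) F m
      = (\<Sum>j<n. (if j = 0 then b * ?F 0 else 0) - (if j = 1 then ?F 1 else 0)
                  - (if j = n - 1 then ?F (n - 1) else 0))"
    unfolding cyclic_conv_def using \<open>2 < n\<close> by (intro sum.cong) auto
  also have "\<dots> = b * F m - ?F 1 - ?F (n - 1)"
    using \<open>2 < n\<close> \<open>m < n\<close> by (simp add: sum_subtractf)
  also have "?F (n - 1) = F (m + 1)"
  proof (cases "m + 1 = n")
    case True
    then show ?thesis using wrap0 by simp
  next
    case False
    have "int m - int (n - 1) = int (m + 1) - int n"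
      using \<open>2 < n\<close> by (simp add: of_nat_diff)
    then have "(int m - int (n - 1)) mod int n = (int (m + 1) - int n) mod int n" by (simp only:)
    also have "\<dots> = int (m + 1)" using False \<open>m < n\<close> by simp
    finally show ?thesis by (metis nat_int)
  qed
  also have "b * F m - ?F 1 - F (m + 1) = (if m = 0 then 1 else 0)"
  proof (cases m)
    case 0
    have "(- 1) mod int n = int (n - 1)"
      using \<open>2 < n\<close> by (simp add: zmod_zminus1_eq_if of_nat_diff)
    then have "?F 1 = F (n - 1)" using 0 by simp
    moreover have "F (n + 1) = b * F n - F (n - 1)"
      using rec[of "n - 1"] \<open>2 < n\<close> by (simp add: numeral_2_eq_2)
    ultimately show ?thesis using 0 wrap0 wrap1 by (simp add: algebra_simps)
  next
    case (Suc p)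
    then have "?F 1 = F p" using \<open>m < n\<close> by simp
    then show ?thesis using rec[of p] Suc by (simp add: algebra_simps)
  qed
  finally show ?thesis .
qed

lemma circ_tridiag_inverse:
  fixes F :: "nat \<Rightarrow> 'a::comm_ring_1"
  assumes "2 < n" and "\<And>p. F (p + 2) = b * F (p + 1) - F p"
    and "F n = F 0" and "F (n + 1) = F 1 + 1"
  defines "E \<equiv> circ n (\<lambda>j. if j = 0 then b else if j = 1 \<or> j = n - 1 then -1 else 0)"
  shows "E * circ n F = 1\<^sub>m n \<and> circ n F * E = 1\<^sub>m n"
proof -
  have "E * circ n F = circ n (\<lambda>m. if m = 0 then 1 else 0)"
    unfolding E_def circ_mult_circ using assms(1-4)
    by (intro circ_cong cyclic_conv_tridiag_eq_delta)
  moreover have "circ n F * E = E * circ n F"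
    unfolding E_def circ_mult_circ by (simp only: cyclic_conv_commute)
  ultimately show ?thesis by (simp add: circ_delta)
qed

lemma scaled_power_quotient:
  fixes c x :: "'a::field"
  assumes "c \<noteq> 0" "j \<le> n"
  shows "c ^ (n - j) * ((c * x) ^ j / (c ^ n - (c * x) ^ n)) = x ^ j / (1 - x ^ n)"
proof -
  have "c ^ (n - j) * c ^ j = c ^ n" using assms(2) by (simp flip: power_add)
  then have "c ^ (n - j) * ((c * x) ^ j / (c ^ n - (c * x) ^ n))
      = c ^ n * x ^ j / (c ^ n * (1 - x ^ n))"
    by (simp add: power_mult_distrib right_diff_distrib mult.assoc
        flip: mult.assoc[of "c ^ (n - j)"])
  also have "\<dots> = x ^ j / (1 - x ^ n)" using assms(1) by simp
  finally show ?thesis .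
qed

lemma two_root_solution:
  fixes r s b :: "'a::field"
  assumes r: "r\<^sup>2 = b * r - 1" and s: "s\<^sup>2 = b * s - 1"
    and "r ^ n \<noteq> 1" "s ^ n \<noteq> 1" "r \<noteq> s"
  defines "F \<equiv> \<lambda>j. (r ^ j / (1 - r ^ n) - s ^ j / (1 - s ^ n)) / (s - r)"
  shows "F (p + 2) = b * F (p + 1) - F p" and "F n = F 0" and "F (n + 1) = F 1 + 1"
proof -
  define G where "G x j = x ^ j / (1 - x ^ n)" for x :: 'a and j
  have F_G: "F j = (G r j - G s j) / (s - r)" for j
    unfolding F_def G_def ..
  have G_rec: "G x (p + 2) = b * G x (p + 1) - G x p" if "x\<^sup>2 = b * x - 1" for x
  proof -
    have "x ^ (p + 2) = x ^ p * x\<^sup>2" by (simp add: power_add power2_eq_square)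
    also have "\<dots> = b * x ^ (p + 1) - x ^ p" unfolding that by (simp add: algebra_simps)
    finally show ?thesis unfolding G_def by (simp add: diff_divide_distrib)
  qed
  show "F (p + 2) = b * F (p + 1) - F p"
    unfolding F_G G_rec[OF r] G_rec[OF s]
    by (simp add: add_divide_distrib diff_divide_distrib algebra_simps)
  have G_wrap: "G x (j + n) = G x j - x ^ j" if "x ^ n \<noteq> 1" for x j
    unfolding G_def using that by (simp add: power_add field_simps)
  have F_wrap: "F (j + n) = F j - (r ^ j - s ^ j) / (s - r)" for j
    unfolding F_G G_wrap[OF assms(3)] G_wrap[OF assms(4)] by (simp add: diff_divide_distrib)
  show "F n = F 0" using F_wrap[of 0] by simp
  have "(r - s) / (s - r) = - 1"
    using assms(5) by (simp add: divide_eq_minus_1_iff)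
  then show "F (n + 1) = F 1 + 1" using F_wrap[of 1] by (simp add: add.commute)
qed

lemma circ_tridiag_inverse_closed_form:
  fixes r s b :: "'a::field"
  assumes "2 < n" and "r\<^sup>2 = b * r - 1" "s\<^sup>2 = b * s - 1"
    and "r ^ n \<noteq> 1" "s ^ n \<noteq> 1" "r \<noteq> s"
  defines "E \<equiv> circ n (\<lambda>j. if j = 0 then b else if j = 1 \<or> j = n - 1 then -1 else 0)"
    and "F \<equiv> \<lambda>j. (r ^ j / (1 - r ^ n) - s ^ j / (1 - s ^ n)) / (s - r)"
  shows "E * circ n F = 1\<^sub>m n \<and> circ n F * E = 1\<^sub>m n"
  unfolding E_def F_def using assms(1)
  by (intro circ_tridiag_inverse two_root_solution[OF assms(2-6)])

lemma sqrt5_quadratic_roots: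
  defines "r \<equiv> (3 - sqrt 5) / 2" and "s \<equiv> (3 + sqrt 5) / 2"
  shows "r\<^sup>2 = 3 * r - 1" "s\<^sup>2 = 3 * s - 1" "0 < r" "r < 1" "1 < s" "s - r = sqrt 5"
proof -
  have "sqrt 5 ^ 2 = (5::real)" "1 < sqrt (5::real)" "sqrt (5::real) < 3"
    by (simp_all add: real_less_rsqrt real_less_lsqrt)
  then show "r\<^sup>2 = 3 * r - 1" "s\<^sup>2 = 3 * s - 1" "0 < r" "r < 1" "1 < s" "s - r = sqrt 5"
    unfolding r_def s_def by (auto simp: power2_eq_square field_simps add_pos_nonneg)
qed

theorem mainTheorem7:
  fixes n :: nat
  assumes "n > 3"
  defines "A \<equiv> circ n (\<lambda>j. if j = 0 then (3::real) else if j = 1 \<or> j = n - 1 then -1 else 0)"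
      and "a \<equiv> (\<lambda>j. 2 ^ (n - j) / sqrt 5 *
                 ((3 - sqrt 5) ^ j / (2 ^ n - (3 - sqrt 5) ^ n)
                  - (3 + sqrt 5) ^ j / (2 ^ n - (3 + sqrt 5) ^ n)))"
  shows "A * circ n a = 1\<^sub>m n \<and> circ n a * A = 1\<^sub>m n"
proof -
  define r s :: real where "r = (3 - sqrt 5) / 2" and "s = (3 + sqrt 5) / 2"
  note roots = sqrt5_quadratic_roots[folded r_def s_def]
  have "r ^ n < 1" "1 < s ^ n"
    using roots(3-5) \<open>n > 3\<close> by (simp_all add: power_less_one_iff one_less_power)
  then have nonroots: "r ^ n \<noteq> 1" "s ^ n \<noteq> 1" "r \<noteq> s" using roots(6) by auto
  have "a j = (r ^ j / (1 - r ^ n) - s ^ j / (1 - s ^ n)) / (s - r)" if "j < n" for j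
  proof -
    have "3 - sqrt 5 = 2 * r" "3 + sqrt 5 = 2 * s" unfolding r_def s_def by simp_all
    then have "a j = (2 ^ (n - j) * ((2 * r) ^ j / (2 ^ n - (2 * r) ^ n))
                    - 2 ^ (n - j) * ((2 * s) ^ j / (2 ^ n - (2 * s) ^ n))) / sqrt 5"
      unfolding a_def
      by (simp only: right_diff_distrib diff_divide_distrib times_divide_eq_left mult.commute)
    moreover have "2 ^ (n - j) * ((2 * x) ^ j / (2 ^ n - (2 * x) ^ n)) = x ^ j / (1 - x ^ n)"
      for x :: real
      using \<open>j < n\<close> by (intro scaled_power_quotient) simp_all
    ultimately show ?thesis using roots(6) by simp
  qed
  then have "circ n a = circ n (\<lambda>j. (r ^ j / (1 - r ^ n) - s ^ j / (1 - s ^ n)) / (s - r))"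
    by (rule circ_cong)
  then show ?thesis
    unfolding A_def using circ_tridiag_inverse_closed_form[OF _ roots(1,2) nonroots] \<open>n > 3\<close>
    by simp
qed

end
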